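(* For each choice $\lambda\in\{1,\,2,\,\frac{|V(\mathcal{B})|}{4}\}$, there are infinitely many balanced bipartite graphs $\mathcal{B}$ (with parts $V_1,V_2$, $|V_1|=|V_2|=n=\frac{|V(\mathcal{B})|}{2}$) such that: (i) $\delta(\mathcal{B})\geq \frac{|V(\mathcal{B})|}{4}+1$; and (ii) there exists a subset $S\subseteq V(\mathcal{B})$ with $|S|=\frac{|V(\mathcal{B})|}{2}+1$ such that $\mathcal{B}[S]$ is a forest and $|S\cap V_i|=\lambda$ for some $i\in\{1,2\}$.
   Context: All graphs are finite and simple. A balanced bipartite graph on $2n$ vertices is a bipartite graph with a given bipartition $(V_1,V_2)$ where $|V_1|=|V_2|=n$. $\delta(G)$ denotes the minimum degree of $G$, and $G[S]$ the subgraph induced by $S\subseteq V(G)$. *)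

theory Defs
  imports Complex_Main
begin

definition balanced_bipartite :: "nat \<Rightarrow> 'a set \<Rightarrow> 'a set \<Rightarrow> ('a \<Rightarrow> 'a \<Rightarrow> bool) \<Rightarrow> bool" where
  "balanced_bipartite n V1 V2 E \<longleftrightarrow>
     finite V1 \<and> finite V2 \<and> V1 \<inter> V2 = {} \<and> card V1 = n \<and> card V2 = n \<and>
     (\<forall>u v. E u v \<longrightarrow> E v u) \<and> (\<forall>v. \<not> E v v) \<and>
     (\<forall>u v. E u v \<longrightarrow> (u \<in> V1 \<and> v \<in> V2) \<or> (u \<in> V2 \<and> v \<in> V1))"

definition degree :: "'a set \<Rightarrow> ('a \<Rightarrow> 'a \<Rightarrow> bool) \<Rightarrow> 'a \<Rightarrow> nat" where
  "degree V E v = card {u \<in> V. E v u}"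

definition has_cycle_in :: "('a \<Rightarrow> 'a \<Rightarrow> bool) \<Rightarrow> 'a set \<Rightarrow> bool" where
  "has_cycle_in E S \<longleftrightarrow> (\<exists>vs. length vs \<ge> 3 \<and> distinct vs \<and> set vs \<subseteq> S \<and>
      (\<forall>i. i + 1 < length vs \<longrightarrow> E (vs ! i) (vs ! (i + 1))) \<and> E (last vs) (hd vs))"

definition induced_forest :: "('a \<Rightarrow> 'a \<Rightarrow> bool) \<Rightarrow> 'a set \<Rightarrow> bool" where
  "induced_forest E S \<longleftrightarrow> \<not> has_cycle_in E S"

end

theory Submission
  imports Defs
begin

(* Every example lives on the vertices {0..<4k}. Start from the complete bipartite graph with
   parts A, B of size 2k and, inside S = {0..2k}, keep only the edges of a chosen forest.
   Vertices outside S keep degree 2k; the forest is chosen so that every vertex of S still has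
   k + 1 neighbours once its neighbours outside S are counted, and |A \<inter> S| is the required
   \<lambda>. G[S] is acyclic because every vertex of S has at most one smaller neighbour in S, while
   the largest vertex of a cycle would have two. *)

lemma cycle_adjacent_mod:
  assumes "\<forall>i. i + 1 < length vs \<longrightarrow> E (vs ! i) (vs ! (i + 1))" "E (last vs) (hd vs)"
    and "i < length vs"
  shows "E (vs ! i) (vs ! (Suc i mod length vs))"
proof (cases "Suc i < length vs")
  case True
  then show ?thesis using assms(1) by simp
next
  case False
  then have "i = length vs - 1" "vs \<noteq> []" using assms(3) by auto
  then show ?thesis using assms(2) by (simp add: last_conv_nth hd_conv_nth)
qed

lemma rotate_cycle_adjacent_mod:
  assumes "\<forall>i < length vs. E (vs ! i) (vs ! (Suc i mod length vs))" and "i < length vs"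
  shows "E (rotate m vs ! i) (rotate m vs ! (Suc i mod length vs))"
proof -
  define j where "j = (m + i) mod length vs"
  have "j < length vs" using assms(2) by (simp add: j_def del: length_greater_0_conv)
  moreover have "rotate m vs ! i = vs ! j" using assms(2) by (simp add: nth_rotate j_def)
  moreover have "rotate m vs ! (Suc i mod length vs) = vs ! ((m + Suc i mod length vs) mod length vs)"
    using assms(2) by (simp add: nth_rotate del: length_greater_0_conv)
  moreover have "(m + Suc i mod length vs) mod length vs = Suc j mod length vs"
    by (simp add: j_def mod_add_right_eq mod_Suc_eq)
  ultimately show ?thesis using assms(1) by simp
qed

lemma induced_forest_if_unique_smaller_neighbour:
  fixes E :: "'a::linorder \<Rightarrow> 'a \<Rightarrow> bool"
  assumes "symp E"
    and unique: "\<And>v u w. v \<in> S \<Longrightarrow> u \<in> S \<Longrightarrow> w \<in> S \<Longrightarrow> u < v \<Longrightarrow> w < v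
      \<Longrightarrow> E v u \<Longrightarrow> E v w \<Longrightarrow> u = w"
  shows "induced_forest E S"
  unfolding induced_forest_def has_cycle_in_def
proof
  assume "\<exists>vs. 3 \<le> length vs \<and> distinct vs \<and> set vs \<subseteq> S \<and>
      (\<forall>i. i + 1 < length vs \<longrightarrow> E (vs ! i) (vs ! (i + 1))) \<and> E (last vs) (hd vs)"
  then obtain vs where len: "3 \<le> length vs" and dist: "distinct vs" and sub: "set vs \<subseteq> S"
    and path: "\<forall>i. i + 1 < length vs \<longrightarrow> E (vs ! i) (vs ! (i + 1))"
    and closing: "E (last vs) (hd vs)"
    by blast
  define L where "L = length vs"
  have "3 \<le> L" using len by (simp add: L_def)
  have "Max (set vs) \<in> set vs" using len by (intro Max_in) auto
  then obtain j where "j < L" and j_max: "vs ! j = Max (set vs)"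
    by (auto simp: L_def in_set_conv_nth)
  define ws where "ws = rotate j vs"
  have ws: "length ws = L" "distinct ws" "set ws = set vs"
    using dist by (simp_all add: ws_def L_def)
  have "vs \<noteq> []" using len by auto
  then have "ws ! 0 = vs ! j"
    using \<open>j < L\<close> nth_rotate[of 0 vs j] by (simp add: ws_def L_def)
  have ws_adj: "E (ws ! i) (ws ! (Suc i mod L))" if "i < L" for i
    using rotate_cycle_adjacent_mod[of vs E] cycle_adjacent_mod[OF path closing] that
    by (simp add: ws_def L_def)
  have smaller: "ws ! i < ws ! 0" if "0 < i" "i < L" for i
  proof -
    have "ws ! i \<in> set vs" using that ws by (metis nth_mem)
    then have "ws ! i \<le> ws ! 0" using \<open>ws ! 0 = vs ! j\<close> j_max by simp
    moreover have "ws ! i \<noteq> ws ! 0" using that ws by (simp add: nth_eq_iff_index_eq)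
    ultimately show ?thesis by simp
  qed
  have in_S: "ws ! i \<in> S" if "i < L" for i
    using that ws sub by (metis nth_mem subsetD)
  have "ws ! 1 = ws ! (L - 1)"
  proof (rule unique)
    show "E (ws ! 0) (ws ! 1)" using ws_adj[of 0] \<open>3 \<le> L\<close> by simp
    show "E (ws ! 0) (ws ! (L - 1))"
      using ws_adj[of "L - 1"] \<open>3 \<le> L\<close> \<open>symp E\<close> by (simp add: symp_def)
  qed (use \<open>3 \<le> L\<close> smaller in_S in simp_all)
  then show False using ws \<open>3 \<le> L\<close> by (simp add: nth_eq_iff_index_eq)
qed

(* Only the edges with both ends in S are filtered by F, so G[S] is the bipartite graph F. *)
definition bipartite_completion :: "'a set \<Rightarrow> 'a set \<Rightarrow> 'a set \<Rightarrow> ('a \<Rightarrow> 'a \<Rightarrow> bool) \<Rightarrow> 'a \<Rightarrow> 'a \<Rightarrow> bool" where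
  "bipartite_completion A B S F = symclp (\<lambda>a b. a \<in> A \<and> b \<in> B \<and> (a \<in> S \<and> b \<in> S \<longrightarrow> F a b))"

lemma symp_bipartite_completion: "symp (bipartite_completion A B S F)"
  by (auto simp: symp_def bipartite_completion_def symclp_def)

lemma balanced_bipartite_completion:
  assumes "finite A" "finite B" "A \<inter> B = {}" "card A = n" "card B = n"
  shows "balanced_bipartite n A B (bipartite_completion A B S F)"
  using assms by (auto simp: balanced_bipartite_def bipartite_completion_def symclp_def)

lemma degree_bipartite_completion:
  assumes "A \<inter> B = {}"
  shows "a \<in> A \<Longrightarrow> degree (A \<union> B) (bipartite_completion A B S F) a
           = card {b \<in> B. a \<in> S \<and> b \<in> S \<longrightarrow> F a b}"
    and "b \<in> B \<Longrightarrow> degree (A \<union> B) (bipartite_completion A B S F) b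
           = card {a \<in> A. a \<in> S \<and> b \<in> S \<longrightarrow> F a b}"
  unfolding degree_def
  by (auto intro!: arg_cong[where f = card] simp: bipartite_completion_def symclp_def)
    (use assms in blast)+

lemma induced_forest_bipartite_completion:
  fixes A B :: "'a::linorder set"
  assumes "A \<inter> B = {}"
    and "\<And>a b b'. \<lbrakk>a \<in> A \<inter> S; b \<in> B \<inter> S; b' \<in> B \<inter> S; b < a; b' < a; F a b; F a b'\<rbrakk> \<Longrightarrow> b = b'"
    and "\<And>b a a'. \<lbrakk>b \<in> B \<inter> S; a \<in> A \<inter> S; a' \<in> A \<inter> S; a < b; a' < b; F a b; F a' b\<rbrakk> \<Longrightarrow> a = a'"
  shows "induced_forest (bipartite_completion A B S F) S"
proof (rule induced_forest_if_unique_smaller_neighbour[OF symp_bipartite_completion])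
  fix v u w
  assume S: "v \<in> S" "u \<in> S" "w \<in> S" and "u < v" "w < v"
    and "bipartite_completion A B S F v u" "bipartite_completion A B S F v w"
  then have "v \<in> A \<and> u \<in> B \<and> w \<in> B \<and> F v u \<and> F v w \<or> v \<in> B \<and> u \<in> A \<and> w \<in> A \<and> F u v \<and> F w v"
    using \<open>A \<inter> B = {}\<close> by (auto simp: bipartite_completion_def symclp_def)
  then show "u = w"
  proof (elim disjE conjE)
    assume "v \<in> A" "u \<in> B" "w \<in> B" "F v u" "F v w"
    then show "u = w" using assms(2) S \<open>u < v\<close> \<open>w < v\<close> by blast
  next
    assume "v \<in> B" "u \<in> A" "w \<in> A" "F u v" "F w v"
    then show "u = w" using assms(3) S \<open>u < v\<close> \<open>w < v\<close> by blast
  qed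
qed

definition dense_with_induced_forest :: "(nat \<Rightarrow> real) \<Rightarrow> nat \<Rightarrow> 'a set \<Rightarrow> 'a set \<Rightarrow> ('a \<Rightarrow> 'a \<Rightarrow> bool) \<Rightarrow> bool" where
  "dense_with_induced_forest lam n V1 V2 E \<longleftrightarrow>
     balanced_bipartite n V1 V2 E \<and>
     (\<forall>v \<in> V1 \<union> V2. real (degree (V1 \<union> V2) E v) \<ge> real (card (V1 \<union> V2)) / 4 + 1) \<and>
     (\<exists>S \<subseteq> V1 \<union> V2. card S = card (V1 \<union> V2) div 2 + 1 \<and> induced_forest E S \<and>
        (\<exists>Vi \<in> {V1, V2}. real (card (S \<inter> Vi)) = lam (card (V1 \<union> V2))))"

lemma dense_with_induced_forest_completion:
  fixes k :: nat
  assumes "0 < k" "finite A" "finite B" "A \<inter> B = {}" "card A = 2*k" "card B = 2*k"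
    and "S \<subseteq> A \<union> B" "card S = 2*k + 1"
    and deg_A: "\<forall>a \<in> A \<inter> S. k + 1 \<le> card {b \<in> B. b \<in> S \<longrightarrow> F a b}"
    and deg_B: "\<forall>b \<in> B \<inter> S. k + 1 \<le> card {a \<in> A. a \<in> S \<longrightarrow> F a b}"
    and forest: "induced_forest (bipartite_completion A B S F) S"
    and "real (card (A \<inter> S)) = lam (4*k)"
  shows "dense_with_induced_forest lam (2*k) A B (bipartite_completion A B S F)"
proof -
  let ?E = "bipartite_completion A B S F"
  have card_AB: "card (A \<union> B) = 4*k"
    using assms(2-6) by (simp add: card_Un_disjoint)
  have deg: "k + 1 \<le> degree (A \<union> B) ?E v" if "v \<in> A \<union> B" for v
  proof (cases "v \<in> S")
    case True
    then show ?thesis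
      using that deg_A deg_B degree_bipartite_completion[OF \<open>A \<inter> B = {}\<close>] by auto
  next
    case False
    then show ?thesis
      using that assms(1,5,6) degree_bipartite_completion[OF \<open>A \<inter> B = {}\<close>] by auto
  qed
  show ?thesis
    unfolding dense_with_induced_forest_def
  proof (intro conjI ballI)
    show "balanced_bipartite (2*k) A B ?E"
      using assms(2-6) by (rule balanced_bipartite_completion)
    show "real (card (A \<union> B)) / 4 + 1 \<le> real (degree (A \<union> B) ?E v)" if "v \<in> A \<union> B" for v
      using deg[OF that] card_AB by simp
    show "\<exists>S' \<subseteq> A \<union> B. card S' = card (A \<union> B) div 2 + 1 \<and> induced_forest ?E S' \<and>
        (\<exists>Vi \<in> {A, B}. real (card (S' \<inter> Vi)) = lam (card (A \<union> B)))"
      using assms(7,8,12) forest card_AB by (intro exI[of _ S]) (auto simp: Int_commute)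
  qed
qed

lemma dense_with_induced_forest_one:
  fixes k :: nat
  assumes "0 < k"
  shows "\<exists>V1 V2 (E :: nat \<Rightarrow> nat \<Rightarrow> bool). dense_with_induced_forest (\<lambda>_. 1) (2*k) V1 V2 E"
proof -
  \<comment> \<open>The complete bipartite graph; G[S] is the star with centre 0.\<close>
  define A where "A = insert 0 {2*k+1..<4*k}"
  define B where "B = {1..2*k}"
  define S where "S = {0..2*k}"
  have parts: "finite A" "finite B" "A \<inter> B = {}" "card A = 2*k" "card B = 2*k"
    using \<open>0 < k\<close> by (auto simp: A_def B_def)
  have "S \<subseteq> A \<union> B" "card S = 2*k + 1" by (auto simp: A_def B_def S_def)
  have "A \<inter> S = {0}" by (auto simp: A_def S_def)
  have "induced_forest (bipartite_completion A B S (\<lambda>_ _. True)) S"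
    by (rule induced_forest_bipartite_completion[OF parts(3)]) (auto simp: A_def S_def)
  then have "dense_with_induced_forest (\<lambda>_. 1) (2*k) A B (bipartite_completion A B S (\<lambda>_ _. True))"
    using \<open>0 < k\<close> parts \<open>S \<subseteq> A \<union> B\<close> \<open>card S = 2*k + 1\<close> \<open>A \<inter> S = {0}\<close>
    by (intro dense_with_induced_forest_completion) simp_all
  then show ?thesis by blast
qed

lemma dense_with_induced_forest_two:
  fixes k :: nat
  assumes "3 \<le> k"
  shows "\<exists>V1 V2 (E :: nat \<Rightarrow> nat \<Rightarrow> bool). dense_with_induced_forest (\<lambda>_. 2) (2*k) V1 V2 E"
proof -
  \<comment> \<open>G[S] is two stars, centred at 0 and k + 1, joined by the edge between k and k + 1.\<close>
  define A where "A = {0, k+1} \<union> {2*k+2..<4*k}"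
  define B where "B = {1..k} \<union> {k+2..2*k+1}"
  define S where "S = {0..2*k}"
  define F where "F a b \<longleftrightarrow> (a = 0 \<longrightarrow> b \<le> k) \<and> (a = k+1 \<longrightarrow> k \<le> b)" for a b :: nat
  have parts: "finite A" "finite B" "A \<inter> B = {}" "card A = 2*k" "card B = 2*k"
    using \<open>3 \<le> k\<close> by (auto simp: A_def B_def card_Un_disjoint)
  have "S \<subseteq> A \<union> B" "card S = 2*k + 1" by (auto simp: A_def B_def S_def)
  have "A \<inter> S = {0, k+1}" using \<open>3 \<le> k\<close> by (auto simp: A_def S_def)
  have deg_A: "k + 1 \<le> card {b \<in> B. b \<in> S \<longrightarrow> F a b}" if a: "a \<in> A \<inter> S" for a
  proof -
    obtain T where "T \<subseteq> {b \<in> B. b \<in> S \<longrightarrow> F a b}" "card T = k + 1"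
    proof (cases "a = 0")
      case True
      then show ?thesis
        using \<open>3 \<le> k\<close> by (intro that[of "insert (2*k+1) {1..k}"]) (auto simp: B_def S_def F_def)
    next
      case False
      then have "a = k + 1" using a \<open>A \<inter> S = {0, k+1}\<close> by auto
      then show ?thesis
        using \<open>3 \<le> k\<close> by (intro that[of "insert k {k+2..2*k+1}"]) (auto simp: B_def S_def F_def)
    qed
    moreover have "finite {b \<in> B. b \<in> S \<longrightarrow> F a b}" using \<open>finite B\<close> by simp
    ultimately show ?thesis by (metis card_mono)
  qed
  have deg_B: "k + 1 \<le> card {a \<in> A. a \<in> S \<longrightarrow> F a b}" for b
  proof -
    have "{2*k+2..<4*k} \<subseteq> {a \<in> A. a \<in> S \<longrightarrow> F a b}" by (auto simp: A_def S_def)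
    then have "card {2*k+2..<4*k} \<le> card {a \<in> A. a \<in> S \<longrightarrow> F a b}"
      using \<open>finite A\<close> by (intro card_mono) auto
    then show ?thesis using \<open>3 \<le> k\<close> by simp
  qed
  have forest: "induced_forest (bipartite_completion A B S F) S"
    by (rule induced_forest_bipartite_completion[OF parts(3)]) (auto simp: A_def B_def S_def F_def)
  have "dense_with_induced_forest (\<lambda>_. 2) (2*k) A B (bipartite_completion A B S F)"
    using \<open>3 \<le> k\<close> \<open>A \<inter> S = {0, k+1}\<close> deg_A deg_B
    by (intro dense_with_induced_forest_completion
        [OF _ parts \<open>S \<subseteq> A \<union> B\<close> \<open>card S = 2*k + 1\<close> _ _ forest]) auto
  then show ?thesis by blast
qed

lemma dense_with_induced_forest_quarter:
  fixes k :: nat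
  assumes "0 < k"
  shows "\<exists>V1 V2 (E :: nat \<Rightarrow> nat \<Rightarrow> bool). dense_with_induced_forest (\<lambda>N. real N / 4) (2*k) V1 V2 E"
proof -
  \<comment> \<open>G[S] is the spider with centre 0 and legs 0 a (a + k) for a = 1..k.\<close>
  define A where "A = {1..k} \<union> {2*k+1..3*k}"
  define B where "B = insert 0 ({k+1..2*k} \<union> {3*k+1..<4*k})"
  define S where "S = {0..2*k}"
  define F where "F a b \<longleftrightarrow> b = 0 \<or> b = a + k" for a b :: nat
  have "card ({k+1..2*k} \<union> {3*k+1..<4*k}) = 2*k - 1"
    using \<open>0 < k\<close> by (subst card_Un_disjoint) auto
  then have parts: "finite A" "finite B" "A \<inter> B = {}" "card A = 2*k" "card B = 2*k"
    using \<open>0 < k\<close> by (auto simp: A_def B_def card_Un_disjoint)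
  have "S \<subseteq> A \<union> B" "card S = 2*k + 1" by (auto simp: A_def B_def S_def)
  have "A \<inter> S = {1..k}" by (auto simp: A_def S_def)
  have deg_A: "k + 1 \<le> card {b \<in> B. b \<in> S \<longrightarrow> F a b}" if "a \<in> A \<inter> S" for a
  proof -
    let ?T = "{0, a + k} \<union> {3*k+1..<4*k}"
    have "?T \<subseteq> {b \<in> B. b \<in> S \<longrightarrow> F a b}"
      using that \<open>A \<inter> S = {1..k}\<close> by (auto simp: B_def S_def F_def)
    moreover have "card ?T = k + 1"
      using that \<open>A \<inter> S = {1..k}\<close> \<open>0 < k\<close> by (subst card_Un_disjoint) auto
    moreover have "finite {b \<in> B. b \<in> S \<longrightarrow> F a b}" using \<open>finite B\<close> by simp
    ultimately show ?thesis by (metis card_mono)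
  qed
  have deg_B: "k + 1 \<le> card {a \<in> A. a \<in> S \<longrightarrow> F a b}" if b: "b \<in> B \<inter> S" for b
  proof -
    obtain T where "T \<subseteq> {a \<in> A. a \<in> S \<longrightarrow> F a b}" "card T = k + 1"
    proof (cases "b = 0")
      case True
      then show ?thesis
        using \<open>0 < k\<close> by (intro that[of "insert 1 {2*k+1..3*k}"]) (auto simp: A_def F_def)
    next
      case False
      then have "b \<in> {k+1..2*k}" using b by (auto simp: B_def S_def)
      then show ?thesis
        by (intro that[of "insert (b - k) {2*k+1..3*k}"]) (auto simp: A_def S_def F_def)
    qed
    moreover have "finite {a \<in> A. a \<in> S \<longrightarrow> F a b}" using \<open>finite A\<close> by simp
    ultimately show ?thesis by (metis card_mono)
  qed
  have forest: "induced_forest (bipartite_completion A B S F) S"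
    by (rule induced_forest_bipartite_completion[OF parts(3)]) (auto simp: A_def B_def S_def F_def)
  have "dense_with_induced_forest (\<lambda>N. real N / 4) (2*k) A B (bipartite_completion A B S F)"
    using \<open>A \<inter> S = {1..k}\<close> deg_A deg_B
    by (intro dense_with_induced_forest_completion
        [OF \<open>0 < k\<close> parts \<open>S \<subseteq> A \<union> B\<close> \<open>card S = 2*k + 1\<close> _ _ forest]) auto
  then show ?thesis by blast
qed

theorem theorem2p6:
  shows "\<forall>lam \<in> {(\<lambda>N::nat. 1::real), (\<lambda>N. 2), (\<lambda>N. real N / 4)}.
    \<forall>m::nat. \<exists>n\<ge>m. \<exists>(V1::nat set) V2 E.
      balanced_bipartite n V1 V2 E \<and>
      (\<forall>v \<in> V1 \<union> V2. real (degree (V1 \<union> V2) E v) \<ge> real (card (V1 \<union> V2)) / 4 + 1) \<and>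
      (\<exists>S \<subseteq> V1 \<union> V2. card S = card (V1 \<union> V2) div 2 + 1 \<and> induced_forest E S \<and>
         (\<exists>Vi \<in> {V1, V2}. real (card (S \<inter> Vi)) = lam (card (V1 \<union> V2))))"
proof -
  have example: "\<exists>n\<ge>m. \<exists>V1 V2 (E :: nat \<Rightarrow> nat \<Rightarrow> bool). dense_with_induced_forest lam n V1 V2 E"
    if "lam \<in> {(\<lambda>N. 1), (\<lambda>N. 2), (\<lambda>N. real N / 4)}" for lam m
  proof -
    have "\<exists>V1 V2 (E :: nat \<Rightarrow> nat \<Rightarrow> bool). dense_with_induced_forest lam (2 * (m + 3)) V1 V2 E"
      using that dense_with_induced_forest_one[of "m + 3"] dense_with_induced_forest_two[of "m + 3"]
        dense_with_induced_forest_quarter[of "m + 3"]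
      by auto
    then show ?thesis by (intro exI[of _ "2 * (m + 3)"]) simp
  qed
  show ?thesis
    by (intro ballI allI example[unfolded dense_with_induced_forest_def])
qed

end
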